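(* Let $k\geq3$, $A=\{0,1,\dots,k-1\}$, $n=k-1$ and let $T\colon A^{n^2}\to A$ be given by $T(x_{1,1},\dots,x_{1,n},\dots,x_{n,1},\dots,x_{n,n})=1$ if $x_{i,j}=i$ for all $i,j$ or $x_{i,j}=j$ for all $i,j$, and $0$ otherwise. Then \[\langle\{T\}\rangle^{(n)}=J_n(A)\cup\{c^n_0\}\cup F,\] where $c^n_0$ is the $n$-ary constant zero function, $J_n(A)$ the set of $n$-ary projections, and $F$ is the set of those $n$-ary functions in $\langle\{T\}\rangle$ which map exactly one $n$-tuple to $1$ and every other $n$-tuple to $0$.
   Context: $\langle\{T\}\rangle$ denotes the clone generated by $T$ (all term operations of positive arity of the algebra $(A;T)$, including projections) and $\langle\{T\}\rangle^{(n)}$ its $n$-ary members. *)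

theory Defs
  imports "HOL-Library.FuncSet"
begin

definition tuples :: "'a set \<Rightarrow> nat \<Rightarrow> 'a list set" where
  "tuples A m = {xs. length xs = m \<and> set xs \<subseteq> A}"

inductive_set term_ops :: "('a list \<Rightarrow> 'a) \<Rightarrow> nat \<Rightarrow> nat \<Rightarrow> ('a list \<Rightarrow> 'a) set"
  for T :: "'a list \<Rightarrow> 'a" and p :: nat and m :: nat where
  proj: "i < m \<Longrightarrow> (\<lambda>xs. xs ! i) \<in> term_ops T p m"
| comp: "length gs = p \<Longrightarrow> (\<forall>g\<in>set gs. g \<in> term_ops T p m) \<Longrightarrow>
         (\<lambda>xs. T (map (\<lambda>g. g xs) gs)) \<in> term_ops T p m"

text \<open>The m-ary members of the clone generated by T on A, as functions A^m \<rightarrow> A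
  (restricted to A^m, so that equality is extensional on A^m).\<close>
definition clone_n :: "'a set \<Rightarrow> ('a list \<Rightarrow> 'a) \<Rightarrow> nat \<Rightarrow> nat \<Rightarrow> ('a list \<Rightarrow> 'a) set" where
  "clone_n A T p m = (\<lambda>f. restrict f (tuples A m)) ` term_ops T p m"

definition projections :: "'a set \<Rightarrow> nat \<Rightarrow> ('a list \<Rightarrow> 'a) set" where
  "projections A m = {restrict (\<lambda>xs. xs ! i) (tuples A m) | i. i < m}"

definition const_op :: "'a set \<Rightarrow> nat \<Rightarrow> 'a \<Rightarrow> ('a list \<Rightarrow> 'a)" where
  "const_op A m c = restrict (\<lambda>_. c) (tuples A m)"

end

theory Submission
  imports Defs
begin

text \<open>
  Every term operation of \<open>T\<close> is, on \<open>A\<^sup>n\<close>, either a projection or a \<open>0\<close>/\<open>1\<close>-valued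
  operation taking the value \<open>1\<close> at most once. For a composite \<open>T(g\<^sub>1\<^sub>1, \<dots>, g\<^sub>n\<^sub>n)\<close> this
  rests on one observation: the two patterns accepted by \<open>T\<close> agree on the diagonal, so
  \<open>T(x) = 1\<close> forces \<open>x\<^sub>i\<^sub>i = i\<close> for every \<open>i\<close>. If two distinct tuples \<open>a\<close>, \<open>b\<close> were both sent
  to \<open>1\<close>, each diagonal argument \<open>g\<^sub>i\<^sub>i\<close> would take the common value \<open>i\<close> at \<open>a\<close> and \<open>b\<close>,
  hence be a projection, onto pairwise distinct coordinates; these exhaust all \<open>n\<close>
  coordinates, on which \<open>a\<close> and \<open>b\<close> then agree. Conversely, \<open>T\<close> applied to \<open>n\<^sup>2\<close> copies of
  one projection is the constant \<open>0\<close>, since \<open>n \<ge> 2\<close> diagonal entries cannot all be equal.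
\<close>

definition projection_on :: "'a list set \<Rightarrow> nat \<Rightarrow> ('a list \<Rightarrow> 'a) \<Rightarrow> bool" where
  "projection_on X n h \<longleftrightarrow> (\<exists>c<n. \<forall>x\<in>X. h x = x ! c)"

definition subsingleton_indicator_on :: "'a set \<Rightarrow> ('a \<Rightarrow> nat) \<Rightarrow> bool" where
  "subsingleton_indicator_on X h \<longleftrightarrow>
     (\<forall>x\<in>X. h x = 0 \<or> h x = 1) \<and> (\<forall>x\<in>X. \<forall>y\<in>X. h x = 1 \<longrightarrow> h y = 1 \<longrightarrow> x = y)"

lemma projection_on_if_equal_nonzero_at_two_points:
  assumes "projection_on X n h \<or> subsingleton_indicator_on X h"
    and "a \<in> X" "b \<in> X" "a \<noteq> b" "h a = h b" "h a \<noteq> 0"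
  shows "projection_on X n h"
  using assms unfolding subsingleton_indicator_on_def by metis

lemma list_eq_if_agree_at_distinct_labels:
  assumes "length a = n" "length b = n"
    and q: "\<And>i. i < n \<Longrightarrow> q i < n"
    and v: "inj_on v {..<n}"
    and a: "\<And>i. i < n \<Longrightarrow> a ! q i = v i"
    and b: "\<And>i. i < n \<Longrightarrow> b ! q i = v i"
  shows "a = b"
proof (rule nth_equalityI)
  have "inj_on q {..<n}"
  proof (rule inj_onI)
    fix i j assume "i \<in> {..<n}" "j \<in> {..<n}" "q i = q j"
    then have "v i = v j" using a by (metis lessThan_iff)
    then show "i = j" using v \<open>i \<in> {..<n}\<close> \<open>j \<in> {..<n}\<close> by (simp add: inj_on_eq_iff)
  qed
  then have q_onto: "q ` {..<n} = {..<n}"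
    using q by (intro endo_inj_surj) auto
  show "a ! c = b ! c" if "c < length a" for c
  proof -
    have "c \<in> q ` {..<n}"
      using q_onto that \<open>length a = n\<close> by simp
    then obtain i where "i < n" "c = q i" by auto
    then show ?thesis using a b by simp
  qed
qed (use assms in simp)

locale diagonal_forcing_indicator =
  fixes T :: "nat list \<Rightarrow> nat" and p n :: nat and d :: "nat \<Rightarrow> nat"
  assumes T_01: "T xs = 0 \<or> T xs = 1"
    and d_less: "i < n \<Longrightarrow> d i < p"
    and T_eq_1_nth: "T xs = 1 \<Longrightarrow> length xs = p \<Longrightarrow> i < n \<Longrightarrow> xs ! d i = Suc i"
begin

lemma comp_eq_1_unique:
  assumes gs: "length gs = p"
      "\<And>g. g \<in> set gs \<Longrightarrow>
         projection_on (tuples A n) n g \<or> subsingleton_indicator_on (tuples A n) g"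
    and a: "a \<in> tuples A n" "T (map (\<lambda>g. g a) gs) = 1"
    and b: "b \<in> tuples A n" "T (map (\<lambda>g. g b) gs) = 1"
  shows "a = b"
proof (rule ccontr)
  assume "a \<noteq> b"
  have diag: "(gs ! d i) x = Suc i"
    if "i < n" "x \<in> {a, b}" for i x
    using T_eq_1_nth[of "map (\<lambda>g. g x) gs" i] that a b gs(1) d_less by auto
  have "projection_on (tuples A n) n (gs ! d i)" if "i < n" for i
    using projection_on_if_equal_nonzero_at_two_points[OF gs(2) a(1) b(1) \<open>a \<noteq> b\<close>]
      diag[OF that] d_less[OF that] gs(1) by simp
  then obtain q where q: "\<And>i. i < n \<Longrightarrow> q i < n \<and> (\<forall>x\<in>tuples A n. (gs ! d i) x = x ! q i)"
    unfolding projection_on_def by metis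
  have "x ! q i = Suc i" if "i < n" "x \<in> {a, b}" for i x
    using q[OF \<open>i < n\<close>] diag[OF that] that(2) a(1) b(1) by auto
  then have "a = b"
    using list_eq_if_agree_at_distinct_labels[of a n b q Suc] q a(1) b(1)
    by (simp add: tuples_def)
  with \<open>a \<noteq> b\<close> show False ..
qed

lemma term_op_projection_or_subsingleton_indicator:
  assumes "h \<in> term_ops T p n"
  shows "projection_on (tuples A n) n h \<or> subsingleton_indicator_on (tuples A n) h"
  using assms
proof (induction h rule: term_ops.induct)
  case (proj i)
  then have "projection_on (tuples A n) n (\<lambda>xs. xs ! i)"
    unfolding projection_on_def by blast
  then show ?case ..
next
  case (comp gs)
  have IH: "projection_on (tuples A n) n g \<or> subsingleton_indicator_on (tuples A n) g"
    if "g \<in> set gs" for g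
    using comp.IH that by blast
  have "subsingleton_indicator_on (tuples A n) (\<lambda>xs. T (map (\<lambda>g. g xs) gs))"
    unfolding subsingleton_indicator_on_def
    using T_01 comp_eq_1_unique[OF comp.hyps(1) IH] by blast
  then show ?case ..
qed

lemma const_op_zero_in_clone_n:
  assumes "n \<ge> 2"
  shows "const_op A n 0 \<in> clone_n A T p n"
proof -
  let ?h = "\<lambda>xs::nat list. T (map (\<lambda>g. g xs) (replicate p (\<lambda>xs. xs ! 0)))"
  have "?h \<in> term_ops T p n"
    using assms by (intro term_ops.comp) (auto intro: term_ops.proj)
  moreover have "T (replicate p c) = 0" for c
  proof (rule ccontr)
    assume "T (replicate p c) \<noteq> 0"
    then have "T (replicate p c) = 1" using T_01[of "replicate p c"] by simp
    then have "replicate p c ! d 0 = 1" "replicate p c ! d 1 = 2"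
      using T_eq_1_nth[of "replicate p c"] assms by auto
    then show False using d_less[of 0] d_less[of 1] assms by simp
  qed
  ultimately show ?thesis
    unfolding clone_n_def const_op_def by (auto intro!: image_eqI[of _ _ ?h])
qed

theorem clone_n_eq:
  assumes "n \<ge> 2"
  shows "clone_n A T p n =
           projections A n \<union> {const_op A n 0} \<union>
           {f \<in> clone_n A T p n. \<exists>x\<in>tuples A n. f x = 1 \<and>
                 (\<forall>y\<in>tuples A n. y \<noteq> x \<longrightarrow> f y = 0)}"
    (is "_ = ?P \<union> _ \<union> ?F")
proof
  show "clone_n A T p n \<subseteq> ?P \<union> {const_op A n 0} \<union> ?F"
  proof
    fix f assume f_clone: "f \<in> clone_n A T p n"
    then obtain h where h: "h \<in> term_ops T p n" and f: "f = restrict h (tuples A n)"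
      unfolding clone_n_def by auto
    show "f \<in> ?P \<union> {const_op A n 0} \<union> ?F"
      using term_op_projection_or_subsingleton_indicator[OF h]
    proof
      assume "projection_on (tuples A n) n h"
      then obtain c where "c < n" "\<forall>x\<in>tuples A n. h x = x ! c"
        unfolding projection_on_def by blast
      then have "f = restrict (\<lambda>xs. xs ! c) (tuples A n)"
        unfolding f by (intro restrict_ext) simp
      then have "f \<in> projections A n"
        unfolding projections_def using \<open>c < n\<close> by blast
      then show ?thesis by (intro UnI1)
    next
      assume h01: "subsingleton_indicator_on (tuples A n) h"
      show ?thesis
      proof (cases "\<exists>x\<in>tuples A n. h x = 1")
        case True
        then obtain x where "x \<in> tuples A n" "h x = 1" by blast
        with h01 have "f x = 1 \<and> (\<forall>y\<in>tuples A n. y \<noteq> x \<longrightarrow> f y = 0)"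
          unfolding subsingleton_indicator_on_def f by auto
        then have "f \<in> ?F"
          using f_clone \<open>x \<in> tuples A n\<close> by blast
        then show ?thesis by (intro UnI2)
      next
        case False
        then have "f = const_op A n 0"
          using h01 unfolding subsingleton_indicator_on_def const_op_def f
          by (auto intro: restrict_ext)
        then show ?thesis by simp
      qed
    qed
  qed
  show "?P \<union> {const_op A n 0} \<union> ?F \<subseteq> clone_n A T p n"
    using const_op_zero_in_clone_n[OF assms]
    unfolding projections_def clone_n_def by (auto intro: term_ops.proj)
qed

end

theorem lemma3p7:
  fixes k :: nat
  assumes "k \<ge> 3"
  defines "A \<equiv> {0..<k}"
      and "n \<equiv> k - 1"
  defines "T \<equiv> (\<lambda>xs::nat list.
             if (\<forall>i<n. \<forall>j<n. xs ! (i * n + j) = i + 1) \<or>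
                (\<forall>i<n. \<forall>j<n. xs ! (i * n + j) = j + 1) then 1 else 0)"
  shows "clone_n A T (n^2) n =
           projections A n \<union> {const_op A n 0} \<union>
           {f \<in> clone_n A T (n^2) n. \<exists>x\<in>tuples A n. f x = 1 \<and>
                 (\<forall>y\<in>tuples A n. y \<noteq> x \<longrightarrow> f y = 0)}"
proof -
  have diag_less: "i * n + i < n^2" if "i < n" for i
  proof -
    have "Suc i * n \<le> n * n"
      using that by (intro mult_le_mono1) simp
    then show ?thesis
      using that by (simp add: power2_eq_square)
  qed
  interpret diagonal_forcing_indicator T "n^2" n "\<lambda>i. i * n + i"
    by unfold_locales (auto simp: T_def diag_less split: if_splits)
  have "n \<ge> 2"
    using assms unfolding n_def by simp
  then show ?thesis
    by (rule clone_n_eq)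
qed

end
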